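(* Let $(X,\|\cdot\|_X)$ be a finite-dimensional real normed space and $x\in S_X$. Then $\|\cdot\|_X$ fails to be differentiable at $x$ if and only if there exist $\delta>0$ and $\varepsilon_0>0$ such that for every $0<\varepsilon<\varepsilon_0$ there exist $u,v\in S_X\setminus\{x,-x\}$ with $$\max\{\|u-x\|_X,\|v+x\|_X\}\le\varepsilon\quad\text{and}\quad \|u-v\|_X\le 2-\delta\varepsilon.$$
   Context: $S_X=\{x\in X:\|x\|_X=1\}$. *)

theory Defs
  imports "HOL-Analysis.Analysis"
begin

end

theory Submission
  imports Defs "HOL-Analysis.Analysis"
begin

text \<open>Write \<open>N'(x; h)\<close> for the right derivative of \<open>t \<mapsto> norm (x + t h)\<close> at \<open>0\<close>; it is
  sublinear in \<open>h\<close>. In finite dimension the convex function \<open>norm\<close> is differentiable at \<open>x\<close>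
  as soon as \<open>N'(x; \<cdot>)\<close> is odd, hence linear: expand \<open>x + h\<close> as the average of the points
  \<open>x + n h\<^sub>b b\<close> over a basis and use convexity together with a bound on the coordinates.

  So if the norm is not differentiable at \<open>x\<close>, some \<open>y\<close> has \<open>N'(x; y) + N'(x; -y) > 0\<close>; since
  \<open>N'(x; h + c x) = N'(x; h) + c\<close>, a shift \<open>w = y - c x\<close> balances both one-sided derivatives at a
  common value \<open>\<sigma> > 0\<close>. For \<open>t\<close> proportional to \<open>\<epsilon>\<close> the unit vectors \<open>u = sgn (x + t w)\<close> and
  \<open>v = sgn (-x + t w)\<close> are \<open>\<epsilon>\<close>-close to \<open>x\<close> and \<open>-x\<close>, and \<open>norm (x \<plusminus> t w) \<ge> 1 + t \<sigma>\<close> pushes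
  \<open>norm (u - v)\<close> below \<open>2 - t \<sigma> / 2\<close>.

  Conversely, if the norm has derivative \<open>D\<close> at \<open>x\<close>, then \<open>D (u - x)\<close> and \<open>D (v + x)\<close> are
  \<open>o(\<epsilon>)\<close> for such \<open>u, v\<close>, and expanding the norm at \<open>(u - v) / 2 = x + ((u - x) - (v + x)) / 2\<close>
  gives \<open>norm (u - v) \<ge> 2 - o(\<epsilon>)\<close>.\<close>

section \<open>Coordinates in a finite-dimensional normed space\<close>

lemma infdist_span_scaleR_le:
  fixes a w :: "'a::real_normed_vector"
  assumes "w \<in> span S"
  shows "\<bar>c\<bar> * infdist a (span S) \<le> norm (c *\<^sub>R a - w)"
proof (cases "c = 0")
  case True
  then show ?thesis by simp
next
  case False
  have "(1/c) *\<^sub>R w \<in> span S" using assms by (simp add: span_scale)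
  then have "infdist a (span S) \<le> norm (a - (1/c) *\<^sub>R w)"
    using infdist_le by (metis dist_norm)
  then have "\<bar>c\<bar> * infdist a (span S) \<le> norm (c *\<^sub>R (a - (1/c) *\<^sub>R w))"
    by (simp add: mult_left_mono)
  also have "c *\<^sub>R (a - (1/c) *\<^sub>R w) = c *\<^sub>R a - w" using False
    by (simp add: algebra_simps)
  finally show ?thesis .
qed

lemma infdist_span_pos:
  fixes a :: "'a::real_normed_vector"
  assumes "closed (span S)" and "a \<notin> span S"
  shows "infdist a (span S) > 0"
proof -
  have "span S \<noteq> {}" using span_zero by blast
  then have "infdist a (span S) \<noteq> 0"
    using assms in_closure_iff_infdist_zero closure_closed by metis
  then show ?thesis using infdist_nonneg[of a "span S"] by linarith
qed

lemma closed_span_finite: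
  fixes S :: "'a::real_normed_vector set"
  assumes "finite S"
  shows "closed (span S)"
  using assms
proof (induction S rule: finite_induct)
  case empty
  then show ?case by simp
next
  case (insert a S)
  show ?case
  proof (cases "a \<in> span S")
    case True
    then show ?thesis using insert by (simp add: span_redundant)
  next
    case False
    define d where "d = infdist a (span S)"
    have dpos: "d > 0" unfolding d_def using insert.IH False by (rule infdist_span_pos)
    show ?thesis
      unfolding closed_sequential_limits
    proof (intro allI impI, elim conjE)
      fix z l
      assume zin: "\<forall>n. z n \<in> span (insert a S)" and zl: "z \<longlonglongrightarrow> l"
      have "\<forall>n. \<exists>k. z n - k *\<^sub>R a \<in> span S" using zin span_breakdown_eq by blast
      then obtain t where t: "\<And>n. z n - t n *\<^sub>R a \<in> span S" by metis
      \<comment> \<open>the coefficient of \<open>a\<close> is controlled by the distance of \<open>a\<close> to \<open>span S\<close>\<close>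
      have coeff_le: "\<bar>t m - t n\<bar> * d \<le> norm (z m - z n)" for m n
      proof -
        have "(z n - t n *\<^sub>R a) - (z m - t m *\<^sub>R a) \<in> span S" using t by (simp add: span_diff)
        from infdist_span_scaleR_le[OF this, of "t m - t n" a]
        show ?thesis by (simp add: d_def algebra_simps)
      qed
      have "Cauchy z" using zl by (rule LIMSEQ_imp_Cauchy)
      have "Cauchy t"
        unfolding Cauchy_def
      proof (intro allI impI)
        fix e :: real assume "e > 0"
        then obtain M where M: "\<forall>m\<ge>M. \<forall>n\<ge>M. dist (z m) (z n) < e * d"
          using \<open>Cauchy z\<close> dpos unfolding Cauchy_def by (meson mult_pos_pos)
        have "dist (t m) (t n) < e" if "m \<ge> M" "n \<ge> M" for m n
        proof -
          have "\<bar>t m - t n\<bar> * d < e * d"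
            using M that coeff_le[of m n] by (smt (verit) dist_norm)
          then show ?thesis using dpos by (simp add: dist_real_def)
        qed
        then show "\<exists>M. \<forall>m\<ge>M. \<forall>n\<ge>M. dist (t m) (t n) < e" by blast
      qed
      then obtain T where "t \<longlonglongrightarrow> T" using Cauchy_convergent_iff convergent_def by blast
      then have "(\<lambda>n. z n - t n *\<^sub>R a) \<longlonglongrightarrow> l - T *\<^sub>R a"
        by (intro tendsto_intros zl)
      then have "l - T *\<^sub>R a \<in> span S"
        using closed_sequentially[OF insert.IH, of "\<lambda>n. z n - t n *\<^sub>R a"] t by blast
      then show "l \<in> span (insert a S)" using span_breakdown_eq by blast
    qed
  qed
qed

lemma representation_le_norm:
  fixes B :: "'a::real_normed_vector set"
  assumes fin: "finite B" and ind: "independent B" and sp: "span B = UNIV"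
  shows "\<exists>C>0. \<forall>h. \<forall>b\<in>B. \<bar>representation B h b\<bar> \<le> C * norm h"
proof -
  have "\<exists>d>0. \<forall>h. \<bar>representation B h b\<bar> * d \<le> norm h" if bB: "b \<in> B" for b
  proof -
    let ?S = "B - {b}"
    define d where "d = infdist b (span ?S)"
    have "b \<notin> span ?S" using ind bB dependent_def by blast
    then have dpos: "d > 0"
      unfolding d_def using fin by (intro infdist_span_pos closed_span_finite) auto
    have "\<bar>representation B h b\<bar> * d \<le> norm h" for h
    proof -
      let ?r = "representation B h"
      have "h = (\<Sum>b'\<in>B. ?r b' *\<^sub>R b')"
        using sum_representation_eq[OF ind _ fin] sp by simp
      also have "\<dots> = ?r b *\<^sub>R b + (\<Sum>b'\<in>?S. ?r b' *\<^sub>R b')"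
        using fin bB by (simp add: sum.remove)
      finally have "?r b *\<^sub>R b - h = - (\<Sum>b'\<in>?S. ?r b' *\<^sub>R b')" by (simp add: algebra_simps)
      moreover have "- (\<Sum>b'\<in>?S. ?r b' *\<^sub>R b') \<in> span ?S"
        by (intro span_neg span_sum span_scale span_base) auto
      ultimately have "?r b *\<^sub>R b - h \<in> span ?S" by simp
      from infdist_span_scaleR_le[OF this, of "?r b" b]
      show ?thesis by (simp add: d_def mult.commute)
    qed
    with dpos show ?thesis by blast
  qed
  then obtain d where d: "\<And>b. b \<in> B \<Longrightarrow> d b > 0 \<and> (\<forall>h. \<bar>representation B h b\<bar> * d b \<le> norm h)"
    by metis
  define C where "C = 1 + (\<Sum>b\<in>B. 1 / d b)"
  have inv_nonneg: "b \<in> B \<Longrightarrow> 0 \<le> 1 / d b" for b using d by fastforce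
  have C_ge: "1 / d b \<le> C" if "b \<in> B" for b
    using member_le_sum[of b B "\<lambda>b. 1 / d b"] that inv_nonneg fin unfolding C_def by force
  have "C > 0" using sum_nonneg[of B "\<lambda>b. 1 / d b"] inv_nonneg unfolding C_def by fastforce
  moreover have "\<bar>representation B h b\<bar> \<le> C * norm h" if b: "b \<in> B" for h b
  proof -
    have "\<bar>representation B h b\<bar> \<le> (1 / d b) * norm h"
      using d[OF b] by (simp add: field_simps)
    also have "\<dots> \<le> C * norm h" using C_ge[OF b] by (intro mult_right_mono) auto
    finally show ?thesis .
  qed
  ultimately show ?thesis by blast
qed

lemma finite_spanning_independent_set:
  assumes "\<exists>B::'a::real_vector set. finite B \<and> span B = UNIV"
  obtains B :: "'a::real_vector set" where "finite B" "independent B" "span B = UNIV"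
proof -
  obtain B0 :: "'a set" where B0: "finite B0" "span B0 = UNIV" using assms by blast
  obtain B where "B \<subseteq> B0" "independent B" "B0 \<subseteq> span B"
    by (rule maximal_independent_subset[of B0])
  then show ?thesis
    using that B0 finite_subset span_mono[of B0 "span B"] by (metis span_span top.extremum_uniqueI)
qed

section \<open>The one-sided directional derivative of the norm\<close>

definition norm_slope :: "'a::real_normed_vector \<Rightarrow> 'a \<Rightarrow> real \<Rightarrow> real" where
  "norm_slope x h t = (norm (x + t *\<^sub>R h) - norm x) / t"

text \<open>By convexity of the norm the slopes decrease as \<open>t \<down> 0\<close> and are bounded below by
  \<open>-norm h\<close>, so the infimum over \<open>t > 0\<close> is the right derivative of \<open>t \<mapsto> norm (x + t h)\<close> at \<open>0\<close>.\<close>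

definition norm_dir_deriv :: "'a::real_normed_vector \<Rightarrow> 'a \<Rightarrow> real" where
  "norm_dir_deriv x h = Inf (norm_slope x h ` {0<..})"

lemma norm_slope_ge: "0 < t \<Longrightarrow> - norm h \<le> norm_slope x h t"
  using norm_triangle_ineq4[of "x + t *\<^sub>R h" "t *\<^sub>R h"]
  by (simp add: norm_slope_def field_simps)

lemma norm_slope_mono:
  assumes s: "0 < s" and st: "s \<le> t"
  shows "norm_slope x h s \<le> norm_slope x h t"
proof -
  have t: "0 < t" using s st by simp
  have "x + s *\<^sub>R h = (1 - s/t) *\<^sub>R x + (s/t) *\<^sub>R (x + t *\<^sub>R h)"
    using t by (simp add: algebra_simps)
  then have "norm (x + s *\<^sub>R h) \<le> norm ((1 - s/t) *\<^sub>R x) + norm ((s/t) *\<^sub>R (x + t *\<^sub>R h))"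
    by (metis norm_triangle_ineq)
  also have "\<dots> = (1 - s/t) * norm x + (s/t) * norm (x + t *\<^sub>R h)"
    using s st t by simp
  finally have "norm (x + s *\<^sub>R h) - norm x \<le> (s/t) * (norm (x + t *\<^sub>R h) - norm x)"
    by (simp add: algebra_simps)
  then show ?thesis unfolding norm_slope_def using s t by (simp add: field_simps)
qed

lemma bdd_below_norm_slope: "bdd_below (norm_slope x h ` {0<..})"
  by (rule bdd_belowI2[of _ "- norm h"]) (simp add: norm_slope_ge)

lemma norm_dir_deriv_le_slope: "0 < t \<Longrightarrow> norm_dir_deriv x h \<le> norm_slope x h t"
  unfolding norm_dir_deriv_def by (rule cInf_lower) (auto simp: bdd_below_norm_slope)

lemma norm_dir_deriv_greatest:
  "(\<And>t. 0 < t \<Longrightarrow> c \<le> norm_slope x h t) \<Longrightarrow> c \<le> norm_dir_deriv x h"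
  unfolding norm_dir_deriv_def by (rule cInf_greatest) auto

lemma norm_dir_deriv_ge: "- norm h \<le> norm_dir_deriv x h"
  by (rule norm_dir_deriv_greatest) (simp add: norm_slope_ge)

lemma norm_add_scaleR_ge_dir_deriv:
  assumes "0 < t"
  shows "norm x + t * norm_dir_deriv x h \<le> norm (x + t *\<^sub>R h)"
proof -
  have "t * norm_dir_deriv x h \<le> t * norm_slope x h t"
    using norm_dir_deriv_le_slope[OF assms] assms by simp
  then show ?thesis using assms by (simp add: norm_slope_def)
qed

lemma norm_slope_eventually_less:
  assumes "e > 0"
  shows "\<exists>\<tau>>0. \<forall>t. 0 < t \<and> t < \<tau> \<longrightarrow> norm_slope x h t < norm_dir_deriv x h + e"
proof -
  have "Inf (norm_slope x h ` {0<..}) < norm_dir_deriv x h + e"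
    using assms unfolding norm_dir_deriv_def by simp
  then have "\<exists>v\<in>norm_slope x h ` {0<..}. v < norm_dir_deriv x h + e"
    by (subst (asm) cInf_less_iff) (auto simp: bdd_below_norm_slope)
  then obtain \<tau> where "\<tau> > 0" "norm_slope x h \<tau> < norm_dir_deriv x h + e" by auto
  moreover have "norm_slope x h t \<le> norm_slope x h \<tau>" if "0 < t" "t < \<tau>" for t
    using that by (intro norm_slope_mono) auto
  ultimately show ?thesis by (meson le_less_trans)
qed

lemma norm_dir_deriv_le:
  assumes "\<And>e. e > 0 \<Longrightarrow> \<exists>t>0. norm_slope x h t \<le> c + e"
  shows "norm_dir_deriv x h \<le> c"
proof (rule field_le_epsilon)
  fix e :: real assume "e > 0"
  then obtain t where "t > 0" "norm_slope x h t \<le> c + e" using assms by blast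
  then show "norm_dir_deriv x h \<le> c + e" using norm_dir_deriv_le_slope[of t x h] by simp
qed

lemma norm_dir_deriv_zero [simp]: "norm_dir_deriv x 0 = 0"
proof -
  have "norm_slope x 0 ` {0<..} = {0}"
    by (auto simp: norm_slope_def intro: image_eqI[of _ _ 1])
  then show ?thesis unfolding norm_dir_deriv_def by simp
qed

lemma norm_dir_deriv_scaleR_pos:
  assumes c: "c > 0"
  shows "norm_dir_deriv x (c *\<^sub>R h) = c * norm_dir_deriv x h"
proof -
  have slope: "norm_slope x (c *\<^sub>R h) t = c * norm_slope x h (c * t)" if "t > 0" for t
    using c that unfolding norm_slope_def by (simp add: field_simps)
  show ?thesis
  proof (rule antisym)
    show "norm_dir_deriv x (c *\<^sub>R h) \<le> c * norm_dir_deriv x h"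
    proof (rule norm_dir_deriv_le)
      fix e :: real assume "e > 0"
      then obtain \<tau> where \<tau>: "\<tau> > 0"
        "\<forall>t. 0 < t \<and> t < \<tau> \<longrightarrow> norm_slope x h t < norm_dir_deriv x h + e / c"
        using norm_slope_eventually_less[of "e / c" x h] c by auto
      define t where "t = \<tau> / (2 * c)"
      have "t > 0" "c * t < \<tau>" using \<tau> c by (auto simp: t_def)
      then have "norm_slope x h (c * t) < norm_dir_deriv x h + e / c" using \<tau> c by simp
      then have "c * norm_slope x h (c * t) \<le> c * norm_dir_deriv x h + e"
        using c by (simp add: field_simps)
      then show "\<exists>t>0. norm_slope x (c *\<^sub>R h) t \<le> c * norm_dir_deriv x h + e"
        using slope \<open>t > 0\<close> by auto
    qed
    show "c * norm_dir_deriv x h \<le> norm_dir_deriv x (c *\<^sub>R h)"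
    proof (rule norm_dir_deriv_greatest)
      fix t :: real assume "t > 0"
      then show "c * norm_dir_deriv x h \<le> norm_slope x (c *\<^sub>R h) t"
        using norm_dir_deriv_le_slope[of "c * t" x h] slope[OF \<open>t > 0\<close>] c by simp
    qed
  qed
qed

lemma norm_dir_deriv_scaleR_nonneg:
  "c \<ge> 0 \<Longrightarrow> norm_dir_deriv x (c *\<^sub>R h) = c * norm_dir_deriv x h"
  by (cases "c = 0") (auto simp: norm_dir_deriv_scaleR_pos)

lemma norm_dir_deriv_add_le:
  "norm_dir_deriv x (a + b) \<le> norm_dir_deriv x a + norm_dir_deriv x b"
proof (rule norm_dir_deriv_le)
  fix e :: real assume "e > 0"
  obtain \<tau>a where \<tau>a: "\<tau>a > 0"
    "\<forall>t. 0 < t \<and> t < \<tau>a \<longrightarrow> norm_slope x a t < norm_dir_deriv x a + e/2"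
    using norm_slope_eventually_less[of "e/2" x a] \<open>e > 0\<close> by auto
  obtain \<tau>b where \<tau>b: "\<tau>b > 0"
    "\<forall>t. 0 < t \<and> t < \<tau>b \<longrightarrow> norm_slope x b t < norm_dir_deriv x b + e/2"
    using norm_slope_eventually_less[of "e/2" x b] \<open>e > 0\<close> by auto
  define t where "t = min \<tau>a \<tau>b / 4"
  have t: "t > 0" "2 * t < \<tau>a" "2 * t < \<tau>b" using \<tau>a \<tau>b by (auto simp: t_def)
  have "(1/2) *\<^sub>R (x + (2*t) *\<^sub>R a) + (1/2) *\<^sub>R (x + (2*t) *\<^sub>R b)
      = ((1/2) *\<^sub>R x + (1/2) *\<^sub>R x) + t *\<^sub>R (a + b)"
    by (simp add: algebra_simps)
  also have "(1/2) *\<^sub>R x + (1/2) *\<^sub>R x = x"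
    by (metis scaleR_add_left field_sum_of_halves scaleR_one)
  finally have midpoint: "(1/2) *\<^sub>R (x + (2*t) *\<^sub>R a) + (1/2) *\<^sub>R (x + (2*t) *\<^sub>R b)
      = x + t *\<^sub>R (a + b)" .
  have "norm (x + t *\<^sub>R (a + b)) \<le>
      norm ((1/2) *\<^sub>R (x + (2*t) *\<^sub>R a)) + norm ((1/2) *\<^sub>R (x + (2*t) *\<^sub>R b))"
    unfolding midpoint[symmetric] by (rule norm_triangle_ineq)
  then have "norm (x + t *\<^sub>R (a + b)) \<le> norm (x + (2*t) *\<^sub>R a) / 2 + norm (x + (2*t) *\<^sub>R b) / 2"
    by simp
  then have "norm_slope x (a + b) t \<le>
      (norm (x + (2*t) *\<^sub>R a) / 2 + norm (x + (2*t) *\<^sub>R b) / 2 - norm x) / t"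
    unfolding norm_slope_def using t by (intro divide_right_mono) auto
  also have "\<dots> = norm_slope x a (2*t) + norm_slope x b (2*t)"
  proof -
    have "(A/2 + B/2 - n) / t = (A - n) / (2*t) + (B - n) / (2*t)" for A B n :: real
      by (simp add: add_divide_distrib diff_divide_distrib)
    then show ?thesis unfolding norm_slope_def .
  qed
  also have "\<dots> < norm_dir_deriv x a + norm_dir_deriv x b + e"
  proof -
    have "norm_slope x a (2*t) < norm_dir_deriv x a + e/2"
      by (intro \<tau>a(2)[rule_format]) (use t in auto)
    moreover have "norm_slope x b (2*t) < norm_dir_deriv x b + e/2"
      by (intro \<tau>b(2)[rule_format]) (use t in auto)
    ultimately show ?thesis by linarith
  qed
  finally show "\<exists>t>0. norm_slope x (a + b) t \<le> norm_dir_deriv x a + norm_dir_deriv x b + e"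
    using t(1) less_imp_le by blast
qed

lemma norm_dir_deriv_self: "norm_dir_deriv x x = norm x"
proof -
  have slope: "norm_slope x x t = norm x" if "t > 0" for t
  proof -
    have "x + t *\<^sub>R x = (1 + t) *\<^sub>R x" by (simp add: algebra_simps)
    then have "norm (x + t *\<^sub>R x) = (1 + t) * norm x"
      using that by simp
    then show ?thesis using that unfolding norm_slope_def by (simp add: field_simps)
  qed
  have "norm_slope x x ` {0<..} = {norm x}"
  proof
    show "norm_slope x x ` {0<..} \<subseteq> {norm x}" using slope by auto
    show "{norm x} \<subseteq> norm_slope x x ` {0<..}" using slope[of 1] by (auto intro: image_eqI[of _ _ 1])
  qed
  then show ?thesis unfolding norm_dir_deriv_def by simp
qed

lemma norm_dir_deriv_minus_self: "norm_dir_deriv x (- x) = - norm x"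
proof (rule antisym)
  have "x + (1/2) *\<^sub>R (- x) = (1 - 1/2) *\<^sub>R x"
    by (simp only: scaleR_diff_left scaleR_one scaleR_minus_right) simp
  then have "norm_slope x (- x) (1/2) = - norm x"
    by (simp add: norm_slope_def)
  then show "norm_dir_deriv x (- x) \<le> - norm x"
    using norm_dir_deriv_le_slope[of "1/2" x "- x"] by simp
  show "- norm x \<le> norm_dir_deriv x (- x)" using norm_dir_deriv_ge[of "- x" x] by simp
qed

lemma norm_dir_deriv_scaleR_self: "norm_dir_deriv x (c *\<^sub>R x) = c * norm x"
proof (cases "c \<ge> 0")
  case True
  then show ?thesis by (simp add: norm_dir_deriv_scaleR_nonneg norm_dir_deriv_self)
next
  case False
  then have "norm_dir_deriv x ((- c) *\<^sub>R (- x)) = (- c) * norm_dir_deriv x (- x)"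
    by (intro norm_dir_deriv_scaleR_nonneg) simp
  then show ?thesis by (simp add: norm_dir_deriv_minus_self)
qed

lemma norm_dir_deriv_add_scaleR_self:
  "norm_dir_deriv x (h + c *\<^sub>R x) = norm_dir_deriv x h + c * norm x"
proof (rule antisym)
  show "norm_dir_deriv x (h + c *\<^sub>R x) \<le> norm_dir_deriv x h + c * norm x"
    using norm_dir_deriv_add_le[of x h "c *\<^sub>R x"] by (simp add: norm_dir_deriv_scaleR_self)
  have "norm_dir_deriv x h = norm_dir_deriv x ((h + c *\<^sub>R x) + (- c) *\<^sub>R x)" by simp
  also have "\<dots> \<le> norm_dir_deriv x (h + c *\<^sub>R x) + norm_dir_deriv x ((- c) *\<^sub>R x)"
    by (rule norm_dir_deriv_add_le)
  also have "\<dots> = norm_dir_deriv x (h + c *\<^sub>R x) - c * norm x"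
    by (simp only: norm_dir_deriv_scaleR_self)
  finally show "norm_dir_deriv x h + c * norm x \<le> norm_dir_deriv x (h + c *\<^sub>R x)"
    by simp
qed

lemma norm_dir_deriv_minus_ge: "- norm_dir_deriv x h \<le> norm_dir_deriv x (- h)"
  using norm_dir_deriv_add_le[of x h "- h"] by simp

section \<open>Differentiability of the norm\<close>

lemma bounded_linear_norm_dir_deriv:
  assumes odd: "\<And>h. norm_dir_deriv x (- h) = - norm_dir_deriv x h"
  shows "bounded_linear (norm_dir_deriv x)"
proof (rule bounded_linear_intro[where K=1])
  show add: "norm_dir_deriv x (a + b) = norm_dir_deriv x a + norm_dir_deriv x b" for a b
  proof (rule antisym)
    show "norm_dir_deriv x (a + b) \<le> norm_dir_deriv x a + norm_dir_deriv x b"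
      by (rule norm_dir_deriv_add_le)
    have "norm_dir_deriv x (- a + - b) \<le> norm_dir_deriv x (- a) + norm_dir_deriv x (- b)"
      by (rule norm_dir_deriv_add_le)
    then show "norm_dir_deriv x a + norm_dir_deriv x b \<le> norm_dir_deriv x (a + b)"
      using odd[of "a + b"] by (simp add: odd)
  qed
  show "norm_dir_deriv x (c *\<^sub>R h) = c *\<^sub>R norm_dir_deriv x h" for c h
  proof (cases "c \<ge> 0")
    case True
    then show ?thesis by (simp add: norm_dir_deriv_scaleR_nonneg)
  next
    case False
    then have "norm_dir_deriv x ((- c) *\<^sub>R (- h)) = (- c) * norm_dir_deriv x (- h)"
      by (intro norm_dir_deriv_scaleR_nonneg) simp
    then show ?thesis by (simp add: odd)
  qed
  show "norm (norm_dir_deriv x h) \<le> norm h * 1" for h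
    using norm_add_scaleR_ge_dir_deriv[of 1 x h] norm_triangle_ineq[of x h] norm_dir_deriv_ge[of h x]
    by simp
qed

lemma norm_remainder_le_average:
  fixes D :: "'a::real_normed_vector \<Rightarrow> real"
  assumes "finite B" "B \<noteq> {}" "linear D"
  defines "n \<equiv> real (card B)"
  shows "norm (x + (\<Sum>b\<in>B. f b)) - norm x - D (\<Sum>b\<in>B. f b)
    \<le> (\<Sum>b\<in>B. norm (x + n *\<^sub>R f b) - norm x - D (n *\<^sub>R f b)) / n"
proof -
  have n: "n > 0" using assms by (simp add: n_def card_gt_0_iff)
  have "x + (\<Sum>b\<in>B. f b) = (\<Sum>b\<in>B. (1/n) *\<^sub>R (x + n *\<^sub>R f b))"
    using n by (simp add: sum.distrib scaleR_add_right n_def flip: scaleR_sum_left)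
  then have "norm (x + (\<Sum>b\<in>B. f b)) \<le> (\<Sum>b\<in>B. norm (x + n *\<^sub>R f b)) / n"
    using norm_sum[of "\<lambda>b. (1/n) *\<^sub>R (x + n *\<^sub>R f b)" B] n
    by (simp add: sum_divide_distrib)
  moreover have "D (\<Sum>b\<in>B. f b) = (\<Sum>b\<in>B. D (n *\<^sub>R f b)) / n"
    using n linear_sum[OF assms(3)] linear_scale[OF assms(3)] by (simp add: sum_divide_distrib)
  moreover have "norm x = (\<Sum>b\<in>B. norm x) / n" using n by (simp add: n_def)
  ultimately show ?thesis by (simp add: sum_subtractf diff_divide_distrib)
qed

lemma norm_remainder_along_line:
  assumes lin: "linear (norm_dir_deriv x)" and "\<eta> > 0"
  shows "\<forall>\<^sub>F s in nhds 0.
    norm (x + s *\<^sub>R b) - norm x - norm_dir_deriv x (s *\<^sub>R b) \<le> \<eta> * \<bar>s\<bar>"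
proof -
  have one_sided: "\<exists>\<tau>>0. \<forall>s. 0 < s \<and> s < \<tau> \<longrightarrow>
    norm (x + s *\<^sub>R h) - norm x - norm_dir_deriv x (s *\<^sub>R h) \<le> \<eta> * s" for h
  proof -
    obtain \<tau> where "\<tau> > 0" and \<tau>: "\<forall>s. 0 < s \<and> s < \<tau> \<longrightarrow> norm_slope x h s < norm_dir_deriv x h + \<eta>"
      using norm_slope_eventually_less[OF \<open>\<eta> > 0\<close>] by blast
    have "norm (x + s *\<^sub>R h) - norm x - norm_dir_deriv x (s *\<^sub>R h) \<le> \<eta> * s"
      if "0 < s" "s < \<tau>" for s
    proof -
      have "s * norm_slope x h s \<le> s * (norm_dir_deriv x h + \<eta>)"
        using \<tau> that by (intro mult_left_mono) auto
      moreover have "s * norm_slope x h s = norm (x + s *\<^sub>R h) - norm x"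
        using that by (simp add: norm_slope_def)
      ultimately show ?thesis
        using linear_scale[OF lin, of s h] by (simp add: algebra_simps)
    qed
    with \<open>\<tau> > 0\<close> show ?thesis by blast
  qed
  obtain \<tau>1 where "\<tau>1 > 0" and \<tau>1: "\<forall>s. 0 < s \<and> s < \<tau>1 \<longrightarrow>
      norm (x + s *\<^sub>R b) - norm x - norm_dir_deriv x (s *\<^sub>R b) \<le> \<eta> * s"
    using one_sided by blast
  obtain \<tau>2 where "\<tau>2 > 0" and \<tau>2: "\<forall>s. 0 < s \<and> s < \<tau>2 \<longrightarrow>
      norm (x + s *\<^sub>R - b) - norm x - norm_dir_deriv x (s *\<^sub>R - b) \<le> \<eta> * s"
    using one_sided by blast
  have "norm (x + s *\<^sub>R b) - norm x - norm_dir_deriv x (s *\<^sub>R b) \<le> \<eta> * \<bar>s\<bar>"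
    if "\<bar>s\<bar> < min \<tau>1 \<tau>2" for s
  proof -
    consider "s > 0" | "s = 0" | "s < 0" by linarith
    then show ?thesis
    proof cases
      case 3
      then show ?thesis using \<tau>2[rule_format, of "- s"] that by simp
    qed (use \<tau>1 that in auto)
  qed
  moreover have "min \<tau>1 \<tau>2 > 0" using \<open>\<tau>1 > 0\<close> \<open>\<tau>2 > 0\<close> by simp
  ultimately show ?thesis
    unfolding eventually_nhds_metric dist_real_def by (intro exI[of _ "min \<tau>1 \<tau>2"]) simp
qed

lemma norm_remainder_small:
  fixes x :: "'a::real_normed_vector"
  assumes findim: "\<exists>B::'a set. finite B \<and> span B = UNIV"
    and lin: "linear (norm_dir_deriv x)" and "e > 0"
  shows "\<exists>d>0. \<forall>h. norm h < d \<longrightarrow> norm (x + h) - norm x - norm_dir_deriv x h \<le> e * norm h"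
proof -
  obtain B :: "'a set" where fin: "finite B" and ind: "independent B" and sp: "span B = UNIV"
    using finite_spanning_independent_set[OF findim] by blast
  show ?thesis
  proof (cases "B = {}")
    case True
    then have trivial: "h = 0" for h :: 'a using sp span_empty by blast
    have "norm (x + h) - norm x - norm_dir_deriv x h \<le> e * norm h" for h
      using linear_0[OF lin] trivial[of h] by simp
    then show ?thesis by (intro exI[of _ 1]) auto
  next
    case False
    define n where "n = real (card B)"
    have n: "n > 0" using fin False by (simp add: n_def card_gt_0_iff)
    obtain C where "C > 0" and C: "\<And>h b. b \<in> B \<Longrightarrow> \<bar>representation B h b\<bar> \<le> C * norm h"
      using representation_le_norm[OF fin ind sp] by blast
    define \<eta> where "\<eta> = e / (n * C)"
    have "\<eta> > 0" using \<open>e > 0\<close> n \<open>C > 0\<close> by (simp add: \<eta>_def)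
    have "\<forall>\<^sub>F s in nhds 0. \<forall>b\<in>B.
        norm (x + s *\<^sub>R b) - norm x - norm_dir_deriv x (s *\<^sub>R b) \<le> \<eta> * \<bar>s\<bar>"
      using fin norm_remainder_along_line[OF lin \<open>\<eta> > 0\<close>] by (simp add: eventually_ball_finite)
    then obtain \<tau> where "\<tau> > 0" and \<tau>: "\<And>b s. b \<in> B \<Longrightarrow> \<bar>s\<bar> < \<tau> \<Longrightarrow>
        norm (x + s *\<^sub>R b) - norm x - norm_dir_deriv x (s *\<^sub>R b) \<le> \<eta> * \<bar>s\<bar>"
      unfolding eventually_nhds_metric dist_real_def by auto
    define d where "d = \<tau> / (n * C)"
    have "d > 0" using \<open>\<tau> > 0\<close> n \<open>C > 0\<close> by (simp add: d_def)
    moreover have "norm (x + h) - norm x - norm_dir_deriv x h \<le> e * norm h" if "norm h < d" for h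
    proof -
      let ?r = "representation B h"
      have h: "h = (\<Sum>b\<in>B. ?r b *\<^sub>R b)"
        using sum_representation_eq[OF ind _ fin] sp by simp
      have rem: "norm (x + (n * ?r b) *\<^sub>R b) - norm x - norm_dir_deriv x ((n * ?r b) *\<^sub>R b)
          \<le> \<eta> * (n * (C * norm h))" if b: "b \<in> B" for b
      proof -
        have "\<bar>n * ?r b\<bar> \<le> n * (C * norm h)"
          using C[OF b] n by (simp add: abs_mult mult_left_mono)
        moreover have "n * (C * norm h) < \<tau>"
          using \<open>norm h < d\<close> n \<open>C > 0\<close> by (simp add: d_def field_simps)
        ultimately show ?thesis
          using \<tau>[OF b, of "n * ?r b"] \<open>\<eta> > 0\<close>
          by (meson le_less_trans mult_left_mono order.trans less_imp_le)
      qed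
      have "norm (x + h) - norm x - norm_dir_deriv x h
          \<le> (\<Sum>b\<in>B. norm (x + n *\<^sub>R (?r b *\<^sub>R b)) - norm x - norm_dir_deriv x (n *\<^sub>R (?r b *\<^sub>R b))) / n"
        using norm_remainder_le_average[OF fin False lin, of x "\<lambda>b. ?r b *\<^sub>R b"] h
        by (simp add: n_def)
      also have "\<dots> \<le> (\<Sum>b\<in>B. \<eta> * (n * (C * norm h))) / n"
        using rem n by (intro divide_right_mono sum_mono) auto
      also have "\<dots> = e * norm h"
        using n \<open>C > 0\<close> by (simp add: \<eta>_def n_def)
      finally show ?thesis .
    qed
    ultimately show ?thesis by blast
  qed
qed

lemma norm_has_derivative_dir_deriv:
  fixes x :: "'a::real_normed_vector"
  assumes findim: "\<exists>B::'a set. finite B \<and> span B = UNIV"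
    and odd: "\<And>h. norm_dir_deriv x (- h) = - norm_dir_deriv x h"
  shows "(norm has_derivative norm_dir_deriv x) (at x)"
  unfolding has_derivative_at_alt
proof (intro conjI allI impI)
  show bl: "bounded_linear (norm_dir_deriv x)" using odd by (rule bounded_linear_norm_dir_deriv)
  fix e :: real assume "e > 0"
  then obtain d where "d > 0" and d: "\<And>h. norm h < d \<Longrightarrow>
      norm (x + h) - norm x - norm_dir_deriv x h \<le> e * norm h"
    using norm_remainder_small[OF findim bounded_linear.linear[OF bl]] by blast
  \<comment> \<open>the remainder is nonnegative since the directional derivative is at most a slope\<close>
  have "norm_dir_deriv x (y - x) \<le> norm y - norm x" for y
    using norm_add_scaleR_ge_dir_deriv[of 1 x "y - x"] by simp
  then have "norm (norm y - norm x - norm_dir_deriv x (y - x)) \<le> e * norm (y - x)"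
    if "norm (y - x) < d" for y
    using d[OF that] by simp
  with \<open>d > 0\<close> show "\<exists>d>0. \<forall>y. norm (y - x) < d \<longrightarrow>
      norm (norm y - norm x - norm_dir_deriv x (y - x)) \<le> e * norm (y - x)"
    by blast
qed

section \<open>Almost antipodal points near a point of non-smoothness\<close>

definition short_sphere_chords :: "'a::real_normed_vector \<Rightarrow> bool" where
  "short_sphere_chords x \<longleftrightarrow> (\<exists>\<delta>>0. \<exists>\<epsilon>0>0. \<forall>\<epsilon>. 0 < \<epsilon> \<and> \<epsilon> < \<epsilon>0 \<longrightarrow>
         (\<exists>u v. norm u = 1 \<and> norm v = 1 \<and> u \<notin> {x, -x} \<and> v \<notin> {x, -x} \<and>
                  max (norm (u - x)) (norm (v + x)) \<le> \<epsilon> \<and>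
                  norm (u - v) \<le> 2 - \<delta> * \<epsilon>))"

lemma norm_sgn_sub_le:
  fixes x y :: "'a::real_normed_vector"
  assumes "norm x = 1"
  shows "norm (sgn y - x) \<le> 2 * norm (y - x)"
proof (cases "y = 0")
  case True
  then show ?thesis using assms by simp
next
  case False
  have "norm (sgn y - y) = \<bar>1 - norm y\<bar>"
  proof -
    have "sgn y - y = (1 / norm y - 1) *\<^sub>R y" by (simp add: sgn_div_norm algebra_simps divide_inverse)
    then show ?thesis using False by (simp add: abs_mult field_simps)
  qed
  also have "\<dots> \<le> norm (y - x)" using norm_triangle_ineq3[of y x] assms by simp
  finally have "norm (sgn y - y) \<le> norm (y - x)" .
  then show ?thesis using norm_triangle_ineq[of "sgn y - y" "y - x"] by simp
qed

lemma sgn_add_scaleR_not_collinear: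
  fixes x w :: "'a::real_normed_vector"
  assumes "t \<noteq> 0" and not_collinear: "\<And>m. w \<noteq> m *\<^sub>R x"
  shows "sgn (c *\<^sub>R x + t *\<^sub>R w) \<noteq> s *\<^sub>R x"
proof
  define y where "y = c *\<^sub>R x + t *\<^sub>R w"
  assume "sgn y = s *\<^sub>R x"
  moreover have "norm y *\<^sub>R sgn y = y" by (cases "y = 0") (simp_all add: sgn_div_norm)
  ultimately have "c *\<^sub>R x + t *\<^sub>R w = (norm y * s) *\<^sub>R x" by (simp add: y_def)
  then have "t *\<^sub>R w = (norm y * s - c) *\<^sub>R x" by (simp add: algebra_simps)
  then have "w = ((norm y * s - c) / t) *\<^sub>R x"
    using \<open>t \<noteq> 0\<close> by (metis divideR_right scaleR_scaleR mult.commute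
        divide_inverse_commute)
  then show False using not_collinear by blast
qed

lemma norm_sgn_sub_sgn_le:
  fixes x w :: "'a::real_normed_vector"
  assumes x: "norm x = 1" and t: "t > 0" and z: "0 \<le> t * \<sigma>" "t * \<sigma> \<le> 1"
    and small: "2 * t * (norm w)\<^sup>2 \<le> \<sigma>"
    and a_ge: "1 + t * \<sigma> \<le> norm (x + t *\<^sub>R w)" and b_ge: "1 + t * \<sigma> \<le> norm (x - t *\<^sub>R w)"
  shows "norm (sgn (x + t *\<^sub>R w) - sgn (- x + t *\<^sub>R w)) \<le> 2 - t * \<sigma> / 2"
proof -
  define a where "a = norm (x + t *\<^sub>R w)"
  define b where "b = norm (- x + t *\<^sub>R w)"
  define M where "M = norm w"
  have b_eq: "b = norm (x - t *\<^sub>R w)"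
    unfolding b_def by (metis minus_diff_eq norm_minus_cancel uminus_add_conv_diff)
  have a1: "1 \<le> a" and b1: "1 \<le> b" using a_ge b_ge z by (auto simp: a_def b_eq)
  have a2: "a \<le> 1 + t * M" and b2: "b \<le> 1 + t * M"
    using norm_triangle_ineq[of x "t *\<^sub>R w"] norm_triangle_ineq4[of x "t *\<^sub>R w"] x t
    by (auto simp: a_def b_eq M_def)
  have "sgn (x + t *\<^sub>R w) - sgn (- x + t *\<^sub>R w) = (1/a + 1/b) *\<^sub>R x + (t * (1/a - 1/b)) *\<^sub>R w"
    using a1 b1 by (simp add: sgn_div_norm a_def b_def algebra_simps divide_inverse)
  then have "norm (sgn (x + t *\<^sub>R w) - sgn (- x + t *\<^sub>R w)) \<le> (1/a + 1/b) + t * \<bar>1/a - 1/b\<bar> * M"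
    using norm_triangle_ineq[of "(1/a + 1/b) *\<^sub>R x" "(t * (1/a - 1/b)) *\<^sub>R w"] a1 b1 x t
    by (simp add: M_def abs_mult)
  also have "\<dots> \<le> 2 / (1 + t * \<sigma>) + t * (t * M) * M"
  proof -
    have "1/a \<le> 1 / (1 + t * \<sigma>)" "1/b \<le> 1 / (1 + t * \<sigma>)"
      using a_ge b_ge z by (auto simp: a_def b_eq intro!: frac_le)
    moreover have "\<bar>1/a - 1/b\<bar> \<le> t * M"
    proof -
      have "\<bar>1/a - 1/b\<bar> = \<bar>b - a\<bar> / (a * b)" using a1 b1 by (simp add: field_simps)
      also have "\<dots> \<le> \<bar>b - a\<bar> / 1"
        using a1 b1 mult_mono[OF a1 b1] by (intro divide_left_mono) auto
      also have "\<dots> \<le> t * M" using a1 b1 a2 b2 by simp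
      finally show ?thesis .
    qed
    then have "t * \<bar>1/a - 1/b\<bar> * M \<le> t * (t * M) * M"
      using t by (simp add: M_def mult_left_mono mult_right_mono)
    ultimately show ?thesis by linarith
  qed
  also have "\<dots> \<le> 2 - t * \<sigma> / 2"
  proof -
    have "2 \<le> (2 - t * \<sigma>) * (1 + t * \<sigma>)"
      using z mult_left_le[of "t * \<sigma>" "t * \<sigma>"] by (simp add: algebra_simps)
    then have "2 / (1 + t * \<sigma>) \<le> 2 - t * \<sigma>" using z by (simp add: divide_le_eq)
    moreover have "t * (t * M) * M \<le> t * \<sigma> / 2"
      using small t mult_left_mono[of "2 * t * M\<^sup>2" \<sigma> t] by (simp add: M_def power2_eq_square)
    ultimately show ?thesis by linarith
  qed
  finally show ?thesis .
qed

lemma norm_dir_deriv_balanced_direction: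
  assumes "norm x = 1" and gap: "norm_dir_deriv x y + norm_dir_deriv x (- y) > 0"
  obtains w where "norm_dir_deriv x w = norm_dir_deriv x (- w)" "norm_dir_deriv x w > 0"
proof -
  define c where "c = (norm_dir_deriv x y - norm_dir_deriv x (- y)) / 2"
  have "norm_dir_deriv x (y + (- c) *\<^sub>R x) = (norm_dir_deriv x y + norm_dir_deriv x (- y)) / 2"
    using norm_dir_deriv_add_scaleR_self[of x y "- c"] assms(1) by (simp add: c_def field_simps)
  moreover have "norm_dir_deriv x (- (y + (- c) *\<^sub>R x)) = (norm_dir_deriv x y + norm_dir_deriv x (- y)) / 2"
    using norm_dir_deriv_add_scaleR_self[of x "- y" c] assms(1) by (simp add: c_def field_simps)
  ultimately show ?thesis using gap that[of "y + (- c) *\<^sub>R x"] by simp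
qed

lemma not_collinear_if_dir_deriv_gap:
  assumes "norm_dir_deriv x w + norm_dir_deriv x (- w) > 0"
  shows "w \<noteq> m *\<^sub>R x"
proof
  assume "w = m *\<^sub>R x"
  then have "norm_dir_deriv x w + norm_dir_deriv x (- w) = 0"
    using norm_dir_deriv_scaleR_self[of x m] norm_dir_deriv_scaleR_self[of x "- m"] by simp
  then show False using assms by simp
qed

lemma sphere_chords_if_dir_deriv_gap:
  fixes x y :: "'a::real_normed_vector"
  assumes x: "norm x = 1" and gap: "norm_dir_deriv x y + norm_dir_deriv x (- y) > 0"
  shows "short_sphere_chords x"
proof -
  obtain w where w_bal: "norm_dir_deriv x w = norm_dir_deriv x (- w)" and w_pos: "norm_dir_deriv x w > 0"
    using norm_dir_deriv_balanced_direction[OF x gap] by blast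
  define \<sigma> where "\<sigma> = norm_dir_deriv x w"
  define M where "M = norm w"
  have "\<sigma> > 0" using w_pos by (simp add: \<sigma>_def)
  have not_collinear: "\<And>m. w \<noteq> m *\<^sub>R x"
    using not_collinear_if_dir_deriv_gap[of x w] w_bal w_pos by simp
  then have "M > 0" using not_collinear[of 0] by (simp add: M_def)
  have "\<exists>u v. norm u = 1 \<and> norm v = 1 \<and> u \<notin> {x, -x} \<and> v \<notin> {x, -x} \<and>
      max (norm (u - x)) (norm (v + x)) \<le> \<epsilon> \<and> norm (u - v) \<le> 2 - \<sigma> / (4 * M) * \<epsilon>"
    if \<epsilon>: "0 < \<epsilon>" "\<epsilon> < min (2 * M / \<sigma>) (\<sigma> / M)" for \<epsilon>
  proof -
    define t where "t = \<epsilon> / (2 * M)"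
    have t: "t > 0" "t * \<sigma> \<le> 1" "2 * t * M\<^sup>2 \<le> \<sigma>" "2 * t * M = \<epsilon>"
      using \<epsilon> \<open>M > 0\<close> \<open>\<sigma> > 0\<close> by (simp_all add: t_def field_simps power2_eq_square)
    have a_ge: "1 + t * \<sigma> \<le> norm (x + t *\<^sub>R w)"
      using norm_add_scaleR_ge_dir_deriv[OF t(1), of x w] x by (simp add: \<sigma>_def)
    have b_ge: "1 + t * \<sigma> \<le> norm (x - t *\<^sub>R w)"
      using norm_add_scaleR_ge_dir_deriv[OF t(1), of x "- w"] x w_bal by (simp add: \<sigma>_def)
    define u where "u = sgn (x + t *\<^sub>R w)"
    define v where "v = sgn (- x + t *\<^sub>R w)"
    have "x + t *\<^sub>R w \<noteq> 0" "- x + t *\<^sub>R w \<noteq> 0"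
      using sgn_add_scaleR_not_collinear[OF _ not_collinear, where t=t and s=0 and c=1]
        sgn_add_scaleR_not_collinear[OF _ not_collinear, where t=t and s=0 and c="-1"] t(1)
      by (auto simp: sgn_zero_iff)
    then have "norm u = 1" "norm v = 1" by (simp_all add: u_def v_def norm_sgn)
    moreover have "u \<notin> {x, -x}" "v \<notin> {x, -x}"
      using sgn_add_scaleR_not_collinear[OF _ not_collinear, where t=t and c=1]
        sgn_add_scaleR_not_collinear[OF _ not_collinear, where t=t and c="-1"] t(1)
      unfolding u_def v_def by (metis insertE empty_iff scaleR_one scaleR_minus1_left less_irrefl)+
    moreover have "norm (u - x) \<le> \<epsilon>"
      using norm_sgn_sub_le[OF x, of "x + t *\<^sub>R w"] t by (simp add: u_def M_def)
    moreover have "norm (v + x) \<le> \<epsilon>"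
      using norm_sgn_sub_le[of "- x" "- x + t *\<^sub>R w"] x t by (simp add: v_def M_def)
    moreover have "norm (u - v) \<le> 2 - \<sigma> / (4 * M) * \<epsilon>"
    proof -
      have "0 \<le> t * \<sigma>" using t(1) \<open>\<sigma> > 0\<close> by simp
      from norm_sgn_sub_sgn_le[OF x t(1) this t(2) _ a_ge b_ge] t(3)
      have "norm (u - v) \<le> 2 - t * \<sigma> / 2" by (simp add: u_def v_def M_def)
      moreover have "\<sigma> / (4 * M) * \<epsilon> = t * \<sigma> / 2" using \<open>M > 0\<close> by (simp add: t_def)
      ultimately show ?thesis by linarith
    qed
    ultimately show ?thesis by auto
  qed
  moreover have "\<sigma> / (4 * M) > 0" "min (2 * M / \<sigma>) (\<sigma> / M) > 0"
    using \<open>\<sigma> > 0\<close> \<open>M > 0\<close> by simp_all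
  ultimately show ?thesis
    unfolding short_sphere_chords_def
    by (intro exI[of _ "\<sigma> / (4 * M)"] exI[of _ "min (2 * M / \<sigma>) (\<sigma> / M)"]) blast
qed

section \<open>Chords at a point of differentiability\<close>

lemma sphere_chords_long_if_differentiable:
  fixes x :: "'a::real_normed_vector"
  assumes x: "norm x = 1" and "norm differentiable (at x)" and "\<delta> > 0"
  shows "\<exists>\<epsilon>0>0. \<forall>\<epsilon> u v. 0 < \<epsilon> \<and> \<epsilon> < \<epsilon>0 \<and> norm u = 1 \<and> norm v = 1 \<and>
    norm (u - x) \<le> \<epsilon> \<and> norm (v + x) \<le> \<epsilon> \<longrightarrow> 2 - \<delta> * \<epsilon> < norm (u - v)"
proof -
  obtain D where "(norm has_derivative D) (at x)"
    using assms(2) unfolding differentiable_def by blast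
  then have lin: "linear D" and
    "\<forall>e>0. \<exists>r>0. \<forall>y. norm (y - x) < r \<longrightarrow> norm (norm y - norm x - D (y - x)) \<le> e * norm (y - x)"
    unfolding has_derivative_at_alt by (auto intro: bounded_linear.linear)
  moreover have "\<delta> / 8 > 0" using \<open>\<delta> > 0\<close> by simp
  ultimately obtain r where "r > 0" and r: "\<And>y. norm (y - x) < r \<Longrightarrow>
      \<bar>norm y - 1 - D (y - x)\<bar> \<le> \<delta> / 8 * norm (y - x)"
    using x by fastforce
  have "2 - \<delta> * \<epsilon> < norm (u - v)"
    if \<epsilon>: "0 < \<epsilon>" "\<epsilon> < r / 2" and uv: "norm u = 1" "norm v = 1" "norm (u - x) \<le> \<epsilon>" "norm (v + x) \<le> \<epsilon>"
    for \<epsilon> u v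
  proof -
    have eta_eps: "\<delta> / 8 * norm z \<le> \<delta> / 8 * \<epsilon>" if "norm z \<le> \<epsilon>" for z :: 'a
      using that \<open>\<delta> > 0\<close> by simp
    have Du: "\<bar>D (u - x)\<bar> \<le> \<delta> / 8 * \<epsilon>"
      using r[of u] eta_eps[of "u - x"] uv \<epsilon> by simp
    have Dv: "\<bar>D (v + x)\<bar> \<le> \<delta> / 8 * \<epsilon>"
    proof -
      have "- v - x = - (v + x)" by simp
      then have "norm (- v - x) = norm (v + x)" by (metis norm_minus_cancel)
      then show ?thesis
        using r[of "- v"] eta_eps[of "v + x"] uv \<epsilon> linear_neg[OF lin, of "v + x"] by simp
    qed
    have "\<delta> / 4 * \<epsilon> = 2 * (\<delta> / 8 * \<epsilon>)" by simp
    define k where "k = (1/2) *\<^sub>R ((u - x) - (v + x))"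
    have "norm k \<le> \<epsilon>"
      using norm_triangle_ineq4[of "u - x" "v + x"] uv by (simp add: k_def)
    then have "\<bar>norm (x + k) - 1 - D k\<bar> \<le> \<delta> / 8 * \<epsilon>"
      using r[of "x + k"] eta_eps[of k] \<epsilon> by simp
    moreover have "D k = (D (u - x) - D (v + x)) / 2"
      using linear_scale[OF lin] linear_diff[OF lin] by (simp add: k_def)
    ultimately have "norm (x + k) \<ge> 1 - \<delta> / 4 * \<epsilon>"
      using Du Dv \<open>\<delta> / 4 * \<epsilon> = 2 * (\<delta> / 8 * \<epsilon>)\<close>
      by argo
    moreover have "u - v = 2 *\<^sub>R (x + k)"
      by (simp add: k_def algebra_simps scaleR_2)
    ultimately show ?thesis using mult_pos_pos[OF \<open>\<delta> > 0\<close> \<epsilon>(1)] by simp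
  qed
  moreover have "r / 2 > 0" using \<open>r > 0\<close> by simp
  ultimately show ?thesis by blast
qed

lemma not_differentiable_if_short_sphere_chords:
  fixes x :: "'a::real_normed_vector"
  assumes x: "norm x = 1" and "short_sphere_chords x"
  shows "\<not> norm differentiable (at x)"
proof
  obtain \<delta> \<epsilon>0 where "\<delta> > 0" "\<epsilon>0 > 0" and short_chords: "\<forall>\<epsilon>. 0 < \<epsilon> \<and> \<epsilon> < \<epsilon>0 \<longrightarrow>
      (\<exists>u v. norm u = 1 \<and> norm v = 1 \<and> u \<notin> {x, -x} \<and> v \<notin> {x, -x} \<and>
        max (norm (u - x)) (norm (v + x)) \<le> \<epsilon> \<and> norm (u - v) \<le> 2 - \<delta> * \<epsilon>)"
    using assms(2) unfolding short_sphere_chords_def by blast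
  assume "norm differentiable (at x)"
  then obtain \<epsilon>1 where "\<epsilon>1 > 0" and long_chords: "\<forall>\<epsilon> u v. 0 < \<epsilon> \<and> \<epsilon> < \<epsilon>1 \<and>
      norm u = 1 \<and> norm v = 1 \<and> norm (u - x) \<le> \<epsilon> \<and> norm (v + x) \<le> \<epsilon> \<longrightarrow>
      2 - \<delta> * \<epsilon> < norm (u - v)"
    using sphere_chords_long_if_differentiable[OF x _ \<open>\<delta> > 0\<close>] by blast
  define \<epsilon> where "\<epsilon> = min \<epsilon>0 \<epsilon>1 / 2"
  have \<epsilon>: "0 < \<epsilon>" "\<epsilon> < \<epsilon>0" "\<epsilon> < \<epsilon>1" using \<open>\<epsilon>0 > 0\<close> \<open>\<epsilon>1 > 0\<close> by (auto simp: \<epsilon>_def)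
  then obtain u v where "norm u = 1" "norm v = 1" "max (norm (u - x)) (norm (v + x)) \<le> \<epsilon>"
    and "norm (u - v) \<le> 2 - \<delta> * \<epsilon>"
    using short_chords by blast
  then show False using long_chords \<epsilon> by fastforce
qed

theorem proposition1:
  fixes x :: "'a::real_normed_vector"
  assumes findim: "\<exists>B::'a set. finite B \<and> span B = UNIV"
    and x_sphere: "norm x = 1"
  shows "\<not> (norm differentiable (at x)) \<longleftrightarrow>
    (\<exists>\<delta>>0. \<exists>\<epsilon>0>0. \<forall>\<epsilon>. 0 < \<epsilon> \<and> \<epsilon> < \<epsilon>0 \<longrightarrow>
       (\<exists>u v. norm u = 1 \<and> norm v = 1 \<and> u \<notin> {x, -x} \<and> v \<notin> {x, -x} \<and>
              max (norm (u - x)) (norm (v + x)) \<le> \<epsilon> \<and>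
              norm (u - v) \<le> 2 - \<delta> * \<epsilon>))"
  unfolding short_sphere_chords_def[symmetric]
proof
  assume "\<not> norm differentiable (at x)"
  then have "\<not> (\<forall>h. norm_dir_deriv x (- h) = - norm_dir_deriv x h)"
    using norm_has_derivative_dir_deriv[OF findim] unfolding differentiable_def by blast
  then obtain y where "norm_dir_deriv x (- y) \<noteq> - norm_dir_deriv x y" by blast
  then have "norm_dir_deriv x y + norm_dir_deriv x (- y) > 0"
    using norm_dir_deriv_minus_ge[of x y] by linarith
  then show "short_sphere_chords x" by (rule sphere_chords_if_dir_deriv_gap[OF x_sphere])
next
  assume "short_sphere_chords x"
  then show "\<not> norm differentiable (at x)"
    by (rule not_differentiable_if_short_sphere_chords[OF x_sphere])
qed

end
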